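(* Let $P_0=(|P_0|,\preccurlyeq_0)$ be a finite poset with $|P_0|=\{x_1,\dots,x_{m_0}\}$, let $i_0\in\{1,\dots,m_0\}$, and fix nonnegative integer values $m_i$ for all $i\ne i_0$. Let $D=\sum m_i$, the sum over those $i\ne i_0$ such that $x_i$ is $\preccurlyeq_0$-incomparable with $x_{i_0}$. Regard $L_\pm(P_0;m_1,\dots,m_{m_0})$ as functions of the nonnegative integer $m_{i_0}$. Then: (a) there is a polynomial $f\in\mathbb{Q}[t]$ of degree exactly $D$ with $L_+(P_0;m_1,\dots,m_{m_0})=f(m_{i_0})$ for all $m_{i_0}\ge0$; (b) there are polynomials $g_0,g_1\in\mathbb{Q}[t]$, each of degree at most $\lfloor D/2\rfloor$ (or zero), such that $L_-(P_0;m_1,\dots,m_{m_0})=g_0(m_{i_0})$ for all even $m_{i_0}\ge0$ and $=g_1(m_{i_0})$ for all odd $m_{i_0}\ge 1$.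
   Context: For nonnegative integers $m_1,\dots,m_{m_0}$ let $C_1,\dots,C_{m_0}$ be pairwise disjoint chains, $C_i$ being $x_{i,1}<\dots<x_{i,m_i}$. The lexicographic sum $P=P_0*(C_1,\dots,C_{m_0})$ is the poset on $\bigcup_i|C_i|$ with $x_{i,j}\preccurlyeq x_{i',j'}$ iff either $i\ne i'$ and $x_i\preccurlyeq_0x_{i'}$, or $i=i'$ and $j\le j'$. A linearization is a total order refining $\preccurlyeq$; relative to the reference ordering $x_{1,1},\dots,x_{1,m_1},x_{2,1},\dots,x_{m_0,m_{m_0}}$ of $|P|$, a linearization listing the elements as the reference ordering permuted by $\sigma$ is even or odd according to the parity of $\sigma$. $L_+(P_0;m_1,\dots,m_{m_0})$ is the number of linearizations of $P$, and $L_-(P_0;m_1,\dots,m_{m_0})$ is the number of even minus the number of odd linearizations of $P$. *)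

theory Defs
  imports "HOL-Combinatorics.Permutations" "HOL-Computational_Algebra.Polynomial"
begin

text \<open>The poset P0 lives on the index set {1..m0} with order relation le0.
  Element x_{i,j} of the lexicographic sum is represented by the pair (i,j).\<close>

definition lexsum_le :: "(nat \<Rightarrow> nat \<Rightarrow> bool) \<Rightarrow> nat \<times> nat \<Rightarrow> nat \<times> nat \<Rightarrow> bool" where
  "lexsum_le le0 a b \<longleftrightarrow>
     (fst a \<noteq> fst b \<and> le0 (fst a) (fst b)) \<or> (fst a = fst b \<and> snd a \<le> snd b)"

definition ref_order :: "nat \<Rightarrow> (nat \<Rightarrow> nat) \<Rightarrow> (nat \<times> nat) list" where
  "ref_order m0 m = concat (map (\<lambda>i. map (\<lambda>j. (i, j)) [1..<m i + 1]) [1..<m0 + 1])"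

text \<open>A linearization is the reference ordering permuted by sigma, i.e. the list whose
  k-th entry is (ref_order m0 m) ! (sigma k), refining the order of the lexicographic sum.\<close>
definition is_linearization ::
  "(nat \<Rightarrow> nat \<Rightarrow> bool) \<Rightarrow> nat \<Rightarrow> (nat \<Rightarrow> nat) \<Rightarrow> (nat \<Rightarrow> nat) \<Rightarrow> bool" where
  "is_linearization le0 m0 m \<sigma> \<longleftrightarrow>
     (let r = ref_order m0 m; N = length r in
       \<sigma> permutes {..<N} \<and>
       (\<forall>k<N. \<forall>l<N. lexsum_le le0 (r ! \<sigma> k) (r ! \<sigma> l) \<longrightarrow> k \<le> l))"

definition L_plus :: "(nat \<Rightarrow> nat \<Rightarrow> bool) \<Rightarrow> nat \<Rightarrow> (nat \<Rightarrow> nat) \<Rightarrow> nat" where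
  "L_plus le0 m0 m = card {\<sigma>. is_linearization le0 m0 m \<sigma>}"

definition L_minus :: "(nat \<Rightarrow> nat \<Rightarrow> bool) \<Rightarrow> nat \<Rightarrow> (nat \<Rightarrow> nat) \<Rightarrow> int" where
  "L_minus le0 m0 m = (\<Sum>\<sigma>\<in>{\<sigma>. is_linearization le0 m0 m \<sigma>}. sign \<sigma>)"

end

theory Submission
  imports Defs "HOL-Library.Product_Lexorder"
begin

text \<open>A linearization of \<open>P\<close> restricts to a linearization \<open>\<tau>\<close> of the elements outside the
  chain \<open>C\<^sub>i\<^sub>0\<close>. In \<open>\<tau>\<close>, everything up to the last element below \<open>x\<^sub>i\<^sub>0\<close> has to precede
  \<open>C\<^sub>i\<^sub>0\<close> and everything from the first element above \<open>x\<^sub>i\<^sub>0\<close> on has to follow it, while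
  \<open>C\<^sub>i\<^sub>0\<close> can be shuffled freely into the block \<open>v(\<tau>)\<close> in between. Hence
  \<open>L\<^sub>+ = \<Sum>\<^sub>\<tau> binom(|v(\<tau>)| + k, |v(\<tau>)|)\<close>, a polynomial in \<open>k = m\<^sub>i\<^sub>0\<close> of degree
  \<open>max |v(\<tau>)| = D\<close>; the maximum is attained by listing the elements below \<open>x\<^sub>i\<^sub>0\<close> first and
  those above it last.

  For \<open>L\<^sub>-\<close> the sign of such a linearization factors into the sign of \<open>\<tau>\<close>, a sign that
  depends only on the parity of \<open>k\<close>, and the sign of the shuffle. Summed over all shuffles the
  last factor is the Gaussian binomial \<open>[|v| + k choose |v|]\<^sub>q\<close> at \<open>q = -1\<close>, which equals
  \<open>binom(\<lfloor>|v|/2\<rfloor> + \<lfloor>k/2\<rfloor>, \<lfloor>|v|/2\<rfloor>)\<close> unless \<open>|v|\<close> and \<open>k\<close> are both odd, and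
  so is a polynomial of degree at most \<open>\<lfloor>|v|/2\<rfloor>\<close> on each parity class of \<open>k\<close>.\<close>

section \<open>Relative position in a list\<close>

fun before :: "'a list \<Rightarrow> 'a \<Rightarrow> 'a \<Rightarrow> bool" where
  "before [] x y \<longleftrightarrow> False"
| "before (a # l) x y \<longleftrightarrow> (a = x \<and> y \<in> set l) \<or> before l x y"

lemma before_set: "before l x y \<Longrightarrow> x \<in> set l \<and> y \<in> set l"
  by (induction l) auto

lemma before_append:
  "before (xs @ ys) x y \<longleftrightarrow> before xs x y \<or> (x \<in> set xs \<and> y \<in> set ys) \<or> before ys x y"
  by (induction xs) auto

lemma before_filter: "P x \<Longrightarrow> P y \<Longrightarrow> before (filter P l) x y \<longleftrightarrow> before l x y"
  by (induction l) auto

lemma before_asym: "distinct l \<Longrightarrow> before l x y \<Longrightarrow> \<not> before l y x"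
  by (induction l) (auto dest: before_set)

lemma before_irrefl: "distinct l \<Longrightarrow> \<not> before l x x"
  using before_asym by fastforce

lemma before_total: "x \<in> set l \<Longrightarrow> y \<in> set l \<Longrightarrow> x \<noteq> y \<Longrightarrow> before l x y \<or> before l y x"
  by (induction l) auto

lemma before_trans: "distinct l \<Longrightarrow> before l x y \<Longrightarrow> before l y z \<Longrightarrow> before l x z"
  by (induction l) (auto dest: before_set)

lemma before_nthI: "i < j \<Longrightarrow> j < length l \<Longrightarrow> before l (l ! i) (l ! j)"
  by (induction l arbitrary: i j) (auto simp: nth_Cons split: nat.split)

lemma sorted_wrt_before: "sorted_wrt R l \<longleftrightarrow> (\<forall>x y. before l x y \<longrightarrow> R x y)"
  by (induction l) auto

lemma sorted_wrt_before_eq: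
  assumes "distinct xs" "distinct c" "set xs = set c" "sorted_wrt (before c) xs"
  shows "xs = c"
  using assms
proof (induction c arbitrary: xs)
  case Nil
  then show ?case by simp
next
  case (Cons a c)
  obtain b xs' where xs: "xs = b # xs'"
    using Cons.prems(3) by (cases xs) auto
  have "b = a"
  proof (rule ccontr)
    assume "b \<noteq> a"
    then have "before (a # c) b a"
      using Cons.prems unfolding xs by auto
    then show False
      using \<open>b \<noteq> a\<close> Cons.prems(2) by (auto dest: before_set)
  qed
  moreover have "xs' = c"
  proof (rule Cons.IH)
    show "distinct xs'" "distinct c" "set xs' = set c"
      using Cons.prems xs \<open>b = a\<close> by auto
    have "sorted_wrt (before (a # c)) xs'"
      using Cons.prems(4) unfolding xs sorted_wrt.simps by blast
    moreover have "before c x y" if "x \<in> set xs'" "before (a # c) x y" for x y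
      using that Cons.prems(1) xs \<open>b = a\<close> by auto
    ultimately show "sorted_wrt (before c) xs'"
      by (rule sorted_wrt_mono_rel[rotated]) blast
  qed
  ultimately show ?case
    using xs by simp
qed

lemma filter_in_shuffles: "l \<in> shuffles (filter P l) (filter (\<lambda>x. \<not> P x) l)"
  by (induction l) (simp_all add: Cons_in_shuffles_leftI Cons_in_shuffles_rightI)

lemma filter_three_blocks:
  assumes "\<And>x y. P x \<Longrightarrow> \<not> P y \<Longrightarrow> \<not> before l y x"
    and "\<And>x y. Q x \<Longrightarrow> \<not> Q y \<Longrightarrow> \<not> before l x y"
    and "\<And>x. x \<in> set l \<Longrightarrow> \<not> (P x \<and> Q x)"
  shows "filter P l @ filter (\<lambda>x. \<not> P x \<and> \<not> Q x) l @ filter Q l = l"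
  using assms
proof (induction l)
  case (Cons a l)
  have IH: "filter P l @ filter (\<lambda>x. \<not> P x \<and> \<not> Q x) l @ filter Q l = l"
  proof (rule Cons.IH)
    show "\<not> before l y x" if "P x" "\<not> P y" for x y
      using Cons.prems(1)[OF that] by simp
    show "\<not> before l x y" if "Q x" "\<not> Q y" for x y
      using Cons.prems(2)[OF that] by simp
  qed (use Cons.prems(3) in simp)
  show ?case
  proof (cases "P a")
    case True
    then show ?thesis
      using IH Cons.prems(3)[of a] by simp
  next
    case notP: False
    then have P: "filter P l = []"
      using Cons.prems(1)[OF _ notP] by (auto simp: filter_empty_conv)
    show ?thesis
    proof (cases "Q a")
      case True
      then have "filter (\<lambda>x. \<not> P x \<and> \<not> Q x) l = []"
        using Cons.prems(2)[OF True] by (auto simp: filter_empty_conv)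
      then show ?thesis
        using IH P notP True by simp
    next
      case False
      then show ?thesis
        using IH P notP by simp
    qed
  qed
qed simp


section \<open>Sign of a permutation and inversions\<close>

definition inversions :: "'a list \<Rightarrow> 'a list \<Rightarrow> ('a \<times> 'a) set" where
  "inversions r l = {(x, y). before l x y \<and> before r y x}"

definition inversion_sign :: "'a list \<Rightarrow> 'a list \<Rightarrow> int" where
  "inversion_sign r l = (-1) ^ card (inversions r l)"

lemma inversions_subset: "inversions r l \<subseteq> set l \<times> set l"
  unfolding inversions_def by (auto dest: before_set)

lemma finite_inversions: "finite (inversions r l)"
  using inversions_subset by (rule finite_subset) simp

lemma inversions_self: "distinct r \<Longrightarrow> inversions r r = {}"
  unfolding inversions_def by (auto dest: before_asym)

lemma adjacent_inversion:
  assumes "distinct l" "distinct r" "set l = set r" "l \<noteq> r"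
  obtains i where "Suc i < length l" "before r (l ! Suc i) (l ! i)"
proof -
  have tr: "transp (before r)"
    using assms(2) by (auto simp: transp_def intro: before_trans)
  have "\<not> sorted_wrt (before r) l"
    using sorted_wrt_before_eq assms by blast
  then obtain i where i: "Suc i < length l" and "\<not> before r (l ! i) (l ! Suc i)"
    unfolding sorted_wrt_iff_nth_Suc_transp[OF tr] by blast
  moreover have "l ! i \<noteq> l ! Suc i"
    using i assms(1) by (simp add: nth_eq_iff_index_eq)
  moreover have "l ! i \<in> set r" "l ! Suc i \<in> set r"
    using i assms(3) nth_mem[of i l] nth_mem[of "Suc i" l] by auto
  ultimately show ?thesis
    using that[OF i] before_total[of "l ! i" r "l ! Suc i"] by blast
qed

lemma permute_list_inject:
  assumes "distinct r" "\<sigma> permutes {..<length r}" "\<sigma>' permutes {..<length r}"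
    and "permute_list \<sigma> r = permute_list \<sigma>' r"
  shows "\<sigma> = \<sigma>'"
proof
  fix i
  show "\<sigma> i = \<sigma>' i"
  proof (cases "i < length r")
    case True
    then have "\<sigma> i < length r" "\<sigma>' i < length r" "r ! \<sigma> i = r ! \<sigma>' i"
      using permutes_in_image[OF assms(2), of i] permutes_in_image[OF assms(3), of i]
        arg_cong[OF assms(4), of "\<lambda>l. l ! i"]
      by (auto simp: permute_list_def)
    then show ?thesis
      using assms(1) by (simp add: nth_eq_iff_index_eq)
  next
    case False
    then show ?thesis
      using assms(2,3) by (simp add: permutes_not_in)
  qed
qed

lemma permute_list_adjacent_transpose:
  assumes "Suc i < length l"
  shows "l = take i l @ l ! i # l ! Suc i # drop (Suc (Suc i)) l"
    and "permute_list (transpose i (Suc i)) l = take i l @ l ! Suc i # l ! i # drop (Suc (Suc i)) l"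
proof -
  show "l = take i l @ l ! i # l ! Suc i # drop (Suc (Suc i)) l"
    using assms by (metis Cons_nth_drop_Suc Suc_lessD append_take_drop_id)
  show "permute_list (transpose i (Suc i)) l = take i l @ l ! Suc i # l ! i # drop (Suc (Suc i)) l"
  proof (rule nth_equalityI)
    fix k
    assume "k < length (permute_list (transpose i (Suc i)) l)"
    then consider "k < i" | "k = i" | "k = Suc i" | d where "k = Suc (Suc i) + d" "k < length l"
      using le_Suc_ex[of "Suc (Suc i)" k] by (cases "k < i"; cases "k = i"; cases "k = Suc i") auto
    then show "permute_list (transpose i (Suc i)) l ! k = (take i l @ l ! Suc i # l ! i # drop (Suc (Suc i)) l) ! k"
      by cases (use assms in \<open>auto simp: permute_list_def nth_append transpose_def\<close>)
  qed (use assms in simp)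
qed

lemma inversions_swap:
  assumes "distinct (us @ x # y # ws)" "distinct r" "before r y x"
  shows "inversions r (us @ x # y # ws) = insert (x, y) (inversions r (us @ y # x # ws))"
    and "(x, y) \<notin> inversions r (us @ y # x # ws)"
  using assms before_asym[OF assms(2,3)]
  by (auto simp: inversions_def before_append dest: before_set)

lemma card_inversions_swap_adjacent:
  assumes "distinct l" "distinct r" "Suc i < length l" "before r (l ! Suc i) (l ! i)"
  shows "card (inversions r l) = Suc (card (inversions r (permute_list (transpose i (Suc i)) l)))"
proof -
  let ?us = "take i l" and ?x = "l ! i" and ?y = "l ! Suc i" and ?ws = "drop (Suc (Suc i)) l"
  note l = permute_list_adjacent_transpose[OF assms(3)]
  have "distinct (?us @ ?x # ?y # ?ws)"
    using assms(1) l(1) by metis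
  note swap = inversions_swap[OF this assms(2,4)]
  show ?thesis
    unfolding l(2) by (subst l(1)) (simp add: swap finite_inversions)
qed

lemma sign_eq_inversion_sign:
  assumes "distinct r" "\<sigma> permutes {..<length r}"
  shows "sign \<sigma> = inversion_sign r (permute_list \<sigma> r)"
proof -
  have "sign \<sigma> = (-1) ^ n" if "\<sigma> permutes {..<length r}" "card (inversions r (permute_list \<sigma> r)) = n"
    for n \<sigma>
    using that
  proof (induction n arbitrary: \<sigma>)
    case 0
    let ?l = "permute_list \<sigma> r"
    have "?l = r"
    proof (rule ccontr)
      assume "?l \<noteq> r"
      then obtain i where "Suc i < length ?l" "before r (?l ! Suc i) (?l ! i)"
        using adjacent_inversion[of ?l r] 0(1) assms(1) by auto
      then have "(?l ! i, ?l ! Suc i) \<in> inversions r ?l"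
        unfolding inversions_def by (auto intro: before_nthI)
      then show False
        using 0(2) finite_inversions by (metis card_0_eq empty_iff)
    qed
    then show ?case
      using permute_list_inject[OF assms(1) 0(1) permutes_id] by simp
  next
    case (Suc n)
    let ?l = "permute_list \<sigma> r"
    have "?l \<noteq> r"
      using Suc.prems(2) inversions_self[OF assms(1)] by auto
    then obtain i where i: "Suc i < length ?l" and inv: "before r (?l ! Suc i) (?l ! i)"
      using adjacent_inversion[of ?l r] Suc.prems(1) assms(1) by auto
    define t where "t = transpose i (Suc i)"
    have t: "t permutes {..<length r}"
      unfolding t_def using i by (intro permutes_swap_id) auto
    have "card (inversions r ?l) = Suc (card (inversions r (permute_list (\<sigma> \<circ> t) r)))"
      using card_inversions_swap_adjacent[OF _ assms(1) i inv] Suc.prems(1) assms(1) t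
      unfolding t_def by (simp add: permute_list_compose)
    then have "sign (\<sigma> \<circ> t) = (-1) ^ n"
      using Suc.prems(2) by (intro Suc.IH permutes_compose[OF t Suc.prems(1)]) linarith
    moreover have "sign (\<sigma> \<circ> t) = sign \<sigma> * sign t"
      using Suc.prems(1) t by (intro sign_compose) (auto simp: permutation_permutes)
    moreover have "sign t = -1"
      unfolding t_def by (simp add: sign_swap_id)
    ultimately show ?case
      by simp
  qed
  then show ?thesis
    unfolding inversion_sign_def using assms(2) by blast
qed

definition inversion_factor :: "'a list \<Rightarrow> 'a list \<Rightarrow> 'a \<Rightarrow> 'a \<Rightarrow> int" where
  "inversion_factor r l x y = (if before l x y \<and> before r y x then -1 else 1)"

lemma inversion_sign_prod: "inversion_sign r l = (\<Prod>x\<in>set l. \<Prod>y\<in>set l. inversion_factor r l x y)"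
proof -
  have "(\<Prod>x\<in>set l. \<Prod>y\<in>set l. inversion_factor r l x y)
      = (\<Prod>p\<in>set l \<times> set l. if p \<in> inversions r l then -1 else 1)"
    unfolding prod.cartesian_product
    by (intro prod.cong) (auto simp: inversions_def inversion_factor_def split: if_splits)
  also have "\<dots> = (-1) ^ card (inversions r l)"
    using inversions_subset[of r l] by (simp add: prod.If_cases Int_absorb1 flip: Int_def)
  finally show ?thesis
    unfolding inversion_sign_def by simp
qed

section \<open>Signed counting of shuffles\<close>

definition cross_sign :: "'a list \<Rightarrow> 'a set \<Rightarrow> 'a set \<Rightarrow> int" where
  "cross_sign l X Y = (\<Prod>x\<in>X. \<Prod>y\<in>Y. if before l x y then -1 else 1)"

text \<open>The Gaussian binomial coefficient \<open>[w + k choose w]\<^sub>q\<close> evaluated at \<open>q = -1\<close>.\<close>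

fun signed_shuffle_count :: "nat \<Rightarrow> nat \<Rightarrow> int" where
  "signed_shuffle_count 0 k = 1"
| "signed_shuffle_count (Suc w) 0 = 1"
| "signed_shuffle_count (Suc w) (Suc k) =
     (-1) ^ Suc k * signed_shuffle_count w (Suc k) + signed_shuffle_count (Suc w) k"

lemma signed_shuffle_count_eq:
  "signed_shuffle_count w k =
     (if even w \<or> even k then int ((w div 2 + k div 2) choose (w div 2)) else 0)"
proof (induction w k rule: signed_shuffle_count.induct)
  case (3 w k)
  consider a b where "w = 2 * a" "k = 2 * b" | a b where "w = 2 * a" "k = Suc (2 * b)"
    | a b where "w = Suc (2 * a)" "k = 2 * b" | a b where "w = Suc (2 * a)" "k = Suc (2 * b)"
    by (metis evenE oddE Suc_eq_plus1)
  then show ?case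
  proof cases
    case 4
    then have "signed_shuffle_count (Suc w) (Suc k) = int ((a + Suc b) choose a) + int ((Suc a + b) choose Suc a)"
      using "3.IH" by simp
    also have "\<dots> = int ((Suc a + Suc b) choose Suc a)"
      by (simp add: add.commute add.left_commute)
    finally show ?thesis
      using 4 by simp
  qed (use "3.IH" in simp_all)
qed simp_all

lemma cross_sign_Cons_left:
  assumes "finite X" "a \<notin> X" "Y \<subseteq> set s"
  shows "cross_sign (a # s) (insert a X) Y = (-1) ^ card Y * cross_sign s X Y"
proof -
  have "(\<Prod>y\<in>Y. if before (a # s) a y then -1 else (1::int)) = (-1) ^ card Y"
    using assms(3) by (subst prod.cong[OF refl, of _ _ "\<lambda>_. -1"]) auto
  moreover have "before (a # s) x y \<longleftrightarrow> before s x y" if "x \<in> X" for x y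
    using that assms(2) by auto
  ultimately show ?thesis
    unfolding cross_sign_def using assms(1,2) by (simp add: prod.insert cong: prod.cong)
qed

lemma cross_sign_Cons_right:
  assumes "finite Y" "b \<notin> set s" "b \<notin> X" "b \<notin> Y"
  shows "cross_sign (b # s) X (insert b Y) = cross_sign s X Y"
proof -
  have "(\<Prod>y\<in>insert b Y. if before (b # s) x y then -1 else 1)
      = (\<Prod>y\<in>Y. if before s x y then -1 else (1::int))" if "x \<in> X" for x
  proof -
    have "x \<noteq> b"
      using that assms(3) by auto
    then show ?thesis
      using assms(1,2,4) by (auto simp: prod.insert dest: before_set)
  qed
  then show ?thesis
    unfolding cross_sign_def by (rule prod.cong[OF refl])
qed

lemma sum_cross_sign_shuffles:
  "set v \<inter> set c = {} \<Longrightarrow> distinct v \<Longrightarrow> distinct c \<Longrightarrow>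
     (\<Sum>s\<in>shuffles v c. cross_sign s (set v) (set c)) = signed_shuffle_count (length v) (length c)"
proof (induction v c rule: shuffles.induct)
  case (1 ys)
  then show ?case by (simp add: cross_sign_def)
next
  case (2 xs)
  then show ?case by (cases xs) (simp_all add: cross_sign_def)
next
  case (3 a v b c)
  have front_a: "cross_sign (a # s) (set (a # v)) (set (b # c))
      = (-1) ^ Suc (length c) * cross_sign s (set v) (set (b # c))"
    if "s \<in> shuffles v (b # c)" for s
    using cross_sign_Cons_left[of "set v" a "set (b # c)" s] set_shuffles[OF that] "3.prems"
    by (auto simp: distinct_card)
  have front_b: "cross_sign (b # s) (set (a # v)) (set (b # c)) = cross_sign s (set (a # v)) (set c)"
    if "s \<in> shuffles (a # v) c" for s
    using cross_sign_Cons_right[of "set c" b s "set (a # v)"] set_shuffles[OF that] "3.prems" by auto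
  have "(\<Sum>s\<in>shuffles (a # v) (b # c). cross_sign s (set (a # v)) (set (b # c)))
      = (\<Sum>s\<in>shuffles v (b # c). cross_sign (a # s) (set (a # v)) (set (b # c)))
        + (\<Sum>s\<in>shuffles (a # v) c. cross_sign (b # s) (set (a # v)) (set (b # c)))"
    using "3.prems"(1) by (subst shuffles.simps, subst sum.union_disjoint) (auto simp: sum.reindex)
  also have "\<dots> = (-1) ^ Suc (length c) * (\<Sum>s\<in>shuffles v (b # c). cross_sign s (set v) (set (b # c)))
        + (\<Sum>s\<in>shuffles (a # v) c. cross_sign s (set (a # v)) (set c))"
    unfolding sum_distrib_left
    by (intro arg_cong2[where f = "(+)"] sum.cong refl) (simp_all only: front_a front_b)
  also have "\<dots> = signed_shuffle_count (length (a # v)) (length (b # c))"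
    using "3.IH" "3.prems" by simp
  finally show ?case .
qed

lemma prod_square_Un:
  fixes f :: "'a \<Rightarrow> 'a \<Rightarrow> 'b::comm_monoid_mult"
  assumes "finite X" "finite Y" "X \<inter> Y = {}"
  shows "(\<Prod>x\<in>X \<union> Y. \<Prod>y\<in>X \<union> Y. f x y)
    = (\<Prod>x\<in>X. \<Prod>y\<in>X. f x y) * (\<Prod>x\<in>X. \<Prod>y\<in>Y. f x y * f y x) * (\<Prod>x\<in>Y. \<Prod>y\<in>Y. f x y)"
proof -
  have "(\<Prod>x\<in>X \<union> Y. \<Prod>y\<in>X \<union> Y. f x y)
      = (\<Prod>x\<in>X. \<Prod>y\<in>X. f x y) * (\<Prod>x\<in>Y. \<Prod>y\<in>X. f x y) * ((\<Prod>x\<in>X. \<Prod>y\<in>Y. f x y) * (\<Prod>x\<in>Y. \<Prod>y\<in>Y. f x y))"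
    using assms by (simp add: prod.union_disjoint prod.distrib)
  also have "(\<Prod>x\<in>Y. \<Prod>y\<in>X. f x y) = (\<Prod>x\<in>X. \<Prod>y\<in>Y. f y x)"
    by (rule prod.swap)
  finally show ?thesis
    by (simp add: prod.distrib ac_simps)
qed

lemma prod_if_mem_const:
  fixes a :: "'b::comm_monoid_mult"
  assumes "finite T" "A \<subseteq> T"
  shows "(\<Prod>x\<in>T. if x \<in> A then a else 1) = a ^ card A"
  using assms by (simp add: prod.If_cases Int_absorb1 flip: Int_def)

text \<open>A pair formed by an element of \<open>A\<close> and one of \<open>c\<close> is an inversion relative to
  \<open>A @ c @ B\<close> exactly when the element of \<open>A\<close> does not come first in \<open>l\<close>; this is where the
  factor \<open>(-1) ^ (length A * length c)\<close> comes from.\<close>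

lemma prod_inversion_factor_block:
  assumes r: "distinct (A @ c @ B)" and l: "distinct l" "set l = set (A @ c @ B)"
  shows "(\<Prod>x\<in>set A \<union> set B. \<Prod>y\<in>set c. inversion_factor (A @ c @ B) l x y * inversion_factor (A @ c @ B) l y x)
    = (-1) ^ (length A * length c) * cross_sign l (set A \<union> set B) (set c)"
proof -
  let ?f = "inversion_factor (A @ c @ B) l"
  have "?f x y * ?f y x = (if x \<in> set A then -1 else 1) * (if before l x y then -1 else 1)"
    if "x \<in> set A \<union> set B" "y \<in> set c" for x y
  proof -
    have "x \<noteq> y" "x \<in> set l" "y \<in> set l"
      using that r l by auto
    then have "before l y x \<longleftrightarrow> \<not> before l x y"
      using before_total[of x l y] before_asym[OF l(1), of x y] by blast
    moreover have "before (A @ c @ B) x y \<longleftrightarrow> x \<in> set A" "before (A @ c @ B) y x \<longleftrightarrow> x \<in> set B"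
      using that r by (auto simp: before_append dest: before_set)
    moreover have "x \<in> set B \<longleftrightarrow> x \<notin> set A"
      using that r by auto
    ultimately show ?thesis
      unfolding inversion_factor_def by auto
  qed
  then have "(\<Prod>x\<in>set A \<union> set B. \<Prod>y\<in>set c. ?f x y * ?f y x)
      = (\<Prod>x\<in>set A \<union> set B. (if x \<in> set A then -1 else 1) ^ card (set c)) * cross_sign l (set A \<union> set B) (set c)"
    by (simp add: cross_sign_def prod.distrib)
  also have "(\<Prod>x\<in>set A \<union> set B. (if x \<in> set A then -1 else 1) ^ card (set c))
      = (\<Prod>x\<in>set A \<union> set B. if x \<in> set A then (-1) ^ card (set c) else (1::int))"
    by (intro prod.cong) auto
  also have "\<dots> = (-1) ^ (length A * length c)"
    using r by (simp add: prod_if_mem_const distinct_card mult.commute flip: power_mult)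
  finally show ?thesis .
qed

lemma inversion_sign_remove_block:
  assumes r: "distinct (A @ c @ B)" and l: "distinct l" "set l = set (A @ c @ B)"
    and c: "filter (\<lambda>x. x \<in> set c) l = c"
  shows "inversion_sign (A @ c @ B) l
    = inversion_sign (A @ B) (filter (\<lambda>x. x \<notin> set c) l) * (-1) ^ (length A * length c)
      * cross_sign l (set A \<union> set B) (set c)"
proof -
  let ?f = "inversion_factor (A @ c @ B) l"
  let ?T = "set A \<union> set B" and ?\<tau> = "filter (\<lambda>x. x \<notin> set c) l"
  have T: "?T \<inter> set c = {}" "set l = ?T \<union> set c" "set ?\<tau> = ?T"
    using r l by auto
  have "filter (\<lambda>x. x \<notin> set c) A = A" "filter (\<lambda>x. x \<notin> set c) B = B"
    using r by (auto simp: filter_id_conv)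
  then have rT: "filter (\<lambda>x. x \<notin> set c) (A @ c @ B) = A @ B"
    by simp
  have TT: "(\<Prod>x\<in>?T. \<Prod>y\<in>?T. ?f x y) = inversion_sign (A @ B) ?\<tau>"
    unfolding inversion_sign_prod T(3)[symmetric]
  proof (intro prod.cong refl)
    fix x y
    assume "x \<in> set ?\<tau>" "y \<in> set ?\<tau>"
    then show "?f x y = inversion_factor (A @ B) ?\<tau> x y"
      using before_filter[of "\<lambda>z. z \<notin> set c" x y l] before_filter[of "\<lambda>z. z \<notin> set c" y x "A @ c @ B"]
      unfolding inversion_factor_def rT by simp
  qed
  have cc: "(\<Prod>x\<in>set c. \<Prod>y\<in>set c. ?f x y) = 1"
  proof (intro prod.neutral ballI)
    fix x y
    assume "x \<in> set c" "y \<in> set c"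
    then have "before l x y \<Longrightarrow> before (A @ c @ B) x y"
      using before_filter[of "\<lambda>z. z \<in> set c" x y l] c by (simp add: before_append)
    then show "?f x y = 1"
      unfolding inversion_factor_def using before_asym[OF r, of x y] by auto
  qed
  have "inversion_sign (A @ c @ B) l = (\<Prod>x\<in>?T \<union> set c. \<Prod>y\<in>?T \<union> set c. ?f x y)"
    unfolding inversion_sign_prod T(2) ..
  also have "\<dots> = (\<Prod>x\<in>?T. \<Prod>y\<in>?T. ?f x y) * (\<Prod>x\<in>?T. \<Prod>y\<in>set c. ?f x y * ?f y x)
      * (\<Prod>x\<in>set c. \<Prod>y\<in>set c. ?f x y)"
    using T(1) by (intro prod_square_Un) auto
  finally show ?thesis
    unfolding TT prod_inversion_factor_block[OF r l] cc by (simp add: mult.assoc)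
qed

lemma cross_sign_append_blocks:
  assumes "distinct (u @ s @ w)" "set s = V \<union> C" "V \<inter> C = {}"
  shows "cross_sign (u @ s @ w) (set u \<union> V \<union> set w) C = (-1) ^ (length u * card C) * cross_sign s V C"
proof -
  let ?g = "\<lambda>x. \<Prod>y\<in>C. if before (u @ s @ w) x y then -1 else (1::int)"
  have fin: "finite V" "finite C"
    using assms(2) by (metis finite_Un finite_set)+
  have "?g x = (-1) ^ card C" if "x \<in> set u" for x
    using that assms by (auto simp: before_append)
  moreover have "?g x = 1" if "x \<in> set w" for x
    using that assms by (intro prod.neutral) (auto simp: before_append dest: before_set)
  moreover have "?g x = (\<Prod>y\<in>C. if before s x y then -1 else 1)" if "x \<in> V" for x
  proof (rule prod.cong[OF refl])
    fix y
    assume "y \<in> C"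
    then have "x \<notin> set u" "x \<notin> set w" "y \<notin> set w"
      using that assms by auto
    then show "(if before (u @ s @ w) x y then -1 else 1) = (if before s x y then -1 else (1::int))"
      by (auto simp: before_append dest: before_set)
  qed
  moreover have "set u \<inter> V = {}" "(set u \<union> V) \<inter> set w = {}"
    using assms by auto
  ultimately show ?thesis
    unfolding cross_sign_def using fin assms(1)
    by (simp add: prod.union_disjoint distinct_card power_mult mult.commute[of "length u"] cong: prod.cong)
qed

section \<open>Polynomials interpolating binomial coefficients\<close>

fun binomial_poly :: "nat \<Rightarrow> rat poly" where
  "binomial_poly 0 = 1"
| "binomial_poly (Suc w) = smult (1 / of_nat (Suc w)) ([:of_nat (Suc w), 1:] * binomial_poly w)"

lemma poly_binomial_poly: "poly (binomial_poly w) (of_nat k) = of_nat ((w + k) choose w)"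
proof (induction w)
  case (Suc w)
  have "Suc w * (Suc (w + k) choose Suc w) = Suc (w + k) * ((w + k) choose w)"
    by (rule Suc_times_binomial)
  then have "of_nat (Suc w) * of_nat ((Suc w + k) choose Suc w) = (of_nat (Suc w + k) :: rat) * of_nat ((w + k) choose w)"
    by (metis add_Suc of_nat_mult)
  moreover have "poly (binomial_poly (Suc w)) (of_nat k) = (of_nat k + of_nat (Suc w)) * of_nat ((w + k) choose w) / of_nat (Suc w)"
    using Suc by (simp add: field_simps)
  ultimately show ?case
    by (simp add: field_simps)
qed simp

lemma degree_binomial_poly: "degree (binomial_poly w) = w"
  and lead_coeff_binomial_poly_pos: "lead_coeff (binomial_poly w) > 0"
proof (induction w)
  case (Suc w)
  have "degree ([:of_nat (Suc w), 1:] * binomial_poly w) = Suc w"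
    using Suc by (subst degree_mult_eq) auto
  moreover have "lead_coeff ([:of_nat (Suc w), 1:] * binomial_poly w) = lead_coeff (binomial_poly w)"
    by (subst lead_coeff_mult) simp
  ultimately show "degree (binomial_poly (Suc w)) = Suc w" "lead_coeff (binomial_poly (Suc w)) > 0"
    using Suc by simp_all
qed simp_all

definition signed_shuffle_poly_even :: "nat \<Rightarrow> rat poly" where
  "signed_shuffle_poly_even w = pcompose (binomial_poly (w div 2)) [:0, 1/2:]"

definition signed_shuffle_poly_odd :: "nat \<Rightarrow> rat poly" where
  "signed_shuffle_poly_odd w = (if even w then pcompose (binomial_poly (w div 2)) [:-1/2, 1/2:] else 0)"

lemma poly_signed_shuffle_poly_even:
  assumes "even k"
  shows "poly (signed_shuffle_poly_even w) (of_nat k) = of_int (signed_shuffle_count w k)"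
proof -
  obtain b where b: "k = 2 * b"
    using assms by (elim evenE)
  have "poly (signed_shuffle_poly_even w) (of_nat k) = poly (binomial_poly (w div 2)) (of_nat b)"
    unfolding signed_shuffle_poly_even_def poly_pcompose using b by simp
  then show ?thesis
    using b by (simp add: signed_shuffle_count_eq poly_binomial_poly)
qed

lemma poly_signed_shuffle_poly_odd:
  assumes "odd k"
  shows "poly (signed_shuffle_poly_odd w) (of_nat k) = of_int (signed_shuffle_count w k)"
proof -
  obtain b where b: "k = Suc (2 * b)"
    using assms by (metis oddE Suc_eq_plus1)
  show ?thesis
  proof (cases "even w")
    case True
    have "poly (signed_shuffle_poly_odd w) (of_nat k) = poly (binomial_poly (w div 2)) (of_nat b)"
      unfolding signed_shuffle_poly_odd_def using b True by (simp add: poly_pcompose field_simps)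
    then show ?thesis
      using b True by (simp add: signed_shuffle_count_eq poly_binomial_poly)
  qed (use b in \<open>simp add: signed_shuffle_count_eq signed_shuffle_poly_odd_def\<close>)
qed

lemma degree_signed_shuffle_poly_even: "degree (signed_shuffle_poly_even w) \<le> w div 2"
  by (simp add: signed_shuffle_poly_even_def degree_pcompose degree_binomial_poly)

lemma degree_signed_shuffle_poly_odd: "degree (signed_shuffle_poly_odd w) \<le> w div 2"
  by (simp add: signed_shuffle_poly_odd_def degree_pcompose degree_binomial_poly)

lemma degree_sum_binomial_poly:
  assumes "finite A" "a \<in> A" "\<And>b. b \<in> A \<Longrightarrow> w b \<le> w a"
  shows "degree (\<Sum>b\<in>A. binomial_poly (w b)) = w a"
proof (rule antisym)
  show "degree (\<Sum>b\<in>A. binomial_poly (w b)) \<le> w a"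
    using assms by (intro degree_sum_le) (auto simp: degree_binomial_poly)
  have "coeff (binomial_poly (w b)) (w a) \<ge> 0" if "b \<in> A" for b
  proof (cases "w b = w a")
    case True
    then show ?thesis
      using lead_coeff_binomial_poly_pos[of "w b"] by (simp add: degree_binomial_poly)
  next
    case False
    then show ?thesis
      using assms(3)[OF that] by (simp add: coeff_eq_0 degree_binomial_poly)
  qed
  moreover have "coeff (binomial_poly (w a)) (w a) > 0"
    using lead_coeff_binomial_poly_pos[of "w a"] by (simp add: degree_binomial_poly)
  ultimately have "coeff (\<Sum>b\<in>A. binomial_poly (w b)) (w a) > 0"
    unfolding coeff_sum using assms(1,2) by (intro sum_pos2) auto
  then show "w a \<le> degree (\<Sum>b\<in>A. binomial_poly (w b))"
    by (intro le_degree) simp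
qed

section \<open>Inserting a chain into the linear extensions of a poset\<close>

text \<open>\<open>R x y\<close> means that \<open>x\<close> may be listed before \<open>y\<close>. A chain \<open>c\<close> is inserted into the
  elements \<open>S\<close>: it has to follow the elements of \<open>Lo\<close>, precede those of \<open>Hi\<close>, and is free
  with respect to the rest of \<open>S\<close>.\<close>

locale chain_insertion =
  fixes R :: "'a \<Rightarrow> 'a \<Rightarrow> bool" and S Lo Hi :: "'a set"
  assumes Lo_subset: "Lo \<subseteq> S" and Hi_subset: "Hi \<subseteq> S"
    and Lo_Hi_disjoint: "Lo \<inter> Hi = {}"
    and Hi_not_before_Lo: "y \<in> Lo \<Longrightarrow> z \<in> Hi \<Longrightarrow> \<not> R z y"
begin

definition extensions_with :: "'a list \<Rightarrow> 'a list set" where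
  "extensions_with c = {l. distinct l \<and> set l = S \<union> set c \<and> sorted_wrt R l}"

abbreviation extensions :: "'a list set" where
  "extensions \<equiv> extensions_with []"

definition compatible_chain :: "'a list \<Rightarrow> bool" where
  "compatible_chain c \<longleftrightarrow> distinct c \<and> set c \<inter> S = {} \<and>
     (\<forall>x\<in>set c. \<forall>y\<in>set c. R x y \<longleftrightarrow> before c x y) \<and>
     (\<forall>y\<in>S. \<forall>x\<in>set c. R y x \<longleftrightarrow> y \<notin> Hi) \<and>
     (\<forall>y\<in>S. \<forall>x\<in>set c. R x y \<longleftrightarrow> y \<notin> Lo)"

definition in_lower_block :: "'a list \<Rightarrow> 'a \<Rightarrow> bool" where
  "in_lower_block \<tau> x \<longleftrightarrow> (\<exists>y\<in>Lo. x = y \<or> before \<tau> x y)"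

definition in_upper_block :: "'a list \<Rightarrow> 'a \<Rightarrow> bool" where
  "in_upper_block \<tau> x \<longleftrightarrow> (\<exists>y\<in>Hi. x = y \<or> before \<tau> y x)"

definition in_free_block :: "'a list \<Rightarrow> 'a \<Rightarrow> bool" where
  "in_free_block \<tau> x \<longleftrightarrow> \<not> in_lower_block \<tau> x \<and> \<not> in_upper_block \<tau> x"

definition lower_block :: "'a list \<Rightarrow> 'a list" where
  "lower_block \<tau> = filter (in_lower_block \<tau>) \<tau>"

definition upper_block :: "'a list \<Rightarrow> 'a list" where
  "upper_block \<tau> = filter (in_upper_block \<tau>) \<tau>"

definition free_block :: "'a list \<Rightarrow> 'a list" where
  "free_block \<tau> = filter (in_free_block \<tau>) \<tau>"

lemma compatible_chain_Nil: "compatible_chain []"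
  by (simp add: compatible_chain_def)

lemma in_lower_block_mem: "in_lower_block \<tau> x \<Longrightarrow> set \<tau> \<subseteq> S \<Longrightarrow> x \<in> S"
  using Lo_subset by (auto simp: in_lower_block_def dest: before_set)

lemma in_upper_block_mem: "in_upper_block \<tau> x \<Longrightarrow> set \<tau> \<subseteq> S \<Longrightarrow> x \<in> S"
  using Hi_subset by (auto simp: in_upper_block_def dest: before_set)

lemma in_lower_block_closed:
  assumes "distinct \<tau>" "in_lower_block \<tau> x" "before \<tau> y x"
  shows "in_lower_block \<tau> y"
  using assms before_trans[OF assms(1), of y x] unfolding in_lower_block_def by blast

lemma in_upper_block_closed:
  assumes "distinct \<tau>" "in_upper_block \<tau> x" "before \<tau> x y"
  shows "in_upper_block \<tau> y"
  using assms before_trans[OF assms(1), of _ x y] unfolding in_upper_block_def by blast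

lemma not_in_lower_and_upper_block:
  assumes "distinct \<tau>" "sorted_wrt R \<tau>" "in_lower_block \<tau> x" "in_upper_block \<tau> x"
  shows False
proof -
  obtain lo hi where lo: "lo \<in> Lo" "x = lo \<or> before \<tau> x lo" and hi: "hi \<in> Hi" "x = hi \<or> before \<tau> hi x"
    using assms(3,4) unfolding in_lower_block_def in_upper_block_def by blast
  have "hi \<noteq> lo"
    using lo(1) hi(1) Lo_Hi_disjoint by blast
  then have "before \<tau> hi lo"
    using lo(2) hi(2) before_trans[OF assms(1), of hi x lo] by auto
  then show False
    using assms(2) Hi_not_before_Lo[OF lo(1) hi(1)] unfolding sorted_wrt_before by blast
qed

lemma chain_filter_eq:
  assumes "compatible_chain c" "l \<in> extensions_with c"
  shows "filter (\<lambda>x. x \<in> set c) l = c"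
proof (rule sorted_wrt_before_eq)
  have "sorted_wrt R (filter (\<lambda>x. x \<in> set c) l)"
    using assms(2) unfolding extensions_with_def by (auto intro: sorted_wrt_filter)
  then show "sorted_wrt (before c) (filter (\<lambda>x. x \<in> set c) l)"
    by (rule sorted_wrt_mono_rel[rotated]) (use assms(1) in \<open>auto simp: compatible_chain_def\<close>)
qed (use assms in \<open>auto simp: extensions_with_def compatible_chain_def\<close>)

lemma lower_block_first:
  assumes c: "compatible_chain c" and l: "l \<in> extensions_with c"
    and x: "in_lower_block (filter (\<lambda>z. z \<in> S) l) x" and y: "\<not> in_lower_block (filter (\<lambda>z. z \<in> S) l) y"
  shows "\<not> before l y x"
proof
  let ?\<tau> = "filter (\<lambda>z. z \<in> S) l"
  assume yx: "before l y x"
  have dl: "distinct l" and sl: "set l = S \<union> set c" and srt: "sorted_wrt R l"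
    using l unfolding extensions_with_def by auto
  obtain lo where lo: "lo \<in> Lo" "x = lo \<or> before ?\<tau> x lo"
    using x unfolding in_lower_block_def by blast
  have xS: "x \<in> S" and loS: "lo \<in> S"
    using in_lower_block_mem[OF x] lo(1) Lo_subset by auto
  have "before l y lo"
    using lo(2) yx before_filter[of "\<lambda>z. z \<in> S" x lo l] xS loS before_trans[OF dl yx] by auto
  show False
  proof (cases "y \<in> S")
    case True
    then have "before ?\<tau> y x"
      using yx xS by (simp add: before_filter)
    then show False
      using in_lower_block_closed[OF _ x] y dl by simp
  next
    case False
    then have "y \<in> set c"
      using before_set[OF yx] sl by auto
    moreover have "R y lo"
      using srt \<open>before l y lo\<close> unfolding sorted_wrt_before by blast
    ultimately show False
      using c loS lo(1) unfolding compatible_chain_def by auto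
  qed
qed

lemma upper_block_last:
  assumes c: "compatible_chain c" and l: "l \<in> extensions_with c"
    and x: "in_upper_block (filter (\<lambda>z. z \<in> S) l) x" and y: "\<not> in_upper_block (filter (\<lambda>z. z \<in> S) l) y"
  shows "\<not> before l x y"
proof
  let ?\<tau> = "filter (\<lambda>z. z \<in> S) l"
  assume xy: "before l x y"
  have dl: "distinct l" and sl: "set l = S \<union> set c" and srt: "sorted_wrt R l"
    using l unfolding extensions_with_def by auto
  obtain hi where hi: "hi \<in> Hi" "x = hi \<or> before ?\<tau> hi x"
    using x unfolding in_upper_block_def by blast
  have xS: "x \<in> S" and hiS: "hi \<in> S"
    using in_upper_block_mem[OF x] hi(1) Hi_subset by auto
  have "before l hi y"
    using hi(2) xy before_filter[of "\<lambda>z. z \<in> S" hi x l] xS hiS before_trans[OF dl _ xy] by auto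
  show False
  proof (cases "y \<in> S")
    case True
    then have "before ?\<tau> x y"
      using xy xS by (simp add: before_filter)
    then show False
      using in_upper_block_closed[OF _ x] y dl by simp
  next
    case False
    then have "y \<in> set c"
      using before_set[OF xy] sl by auto
    moreover have "R hi y"
      using srt \<open>before l hi y\<close> unfolding sorted_wrt_before by blast
    ultimately show False
      using c hiS hi(1) unfolding compatible_chain_def by auto
  qed
qed

lemma extensions_with_blocks:
  assumes c: "compatible_chain c" and l: "l \<in> extensions_with c"
  defines "\<tau> \<equiv> filter (\<lambda>x. x \<in> S) l"
  shows "lower_block \<tau> @ filter (in_free_block \<tau>) l @ upper_block \<tau> = l"
proof -
  have \<tau>: "distinct \<tau>" "sorted_wrt R \<tau>" "set \<tau> \<subseteq> S"
    using l unfolding \<tau>_def extensions_with_def by (auto intro: sorted_wrt_filter)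
  have "filter (in_lower_block \<tau>) l = lower_block \<tau>" "filter (in_upper_block \<tau>) l = upper_block \<tau>"
    unfolding lower_block_def upper_block_def \<tau>_def filter_filter
    using in_lower_block_mem in_upper_block_mem \<tau>(3) unfolding \<tau>_def by (auto intro: filter_cong)
  moreover have "filter (in_lower_block \<tau>) l @ filter (in_free_block \<tau>) l @ filter (in_upper_block \<tau>) l = l"
    unfolding in_free_block_def
  proof (rule filter_three_blocks)
    show "\<not> before l y x" if "in_lower_block \<tau> x" "\<not> in_lower_block \<tau> y" for x y
      using lower_block_first[OF c l] that unfolding \<tau>_def by blast
    show "\<not> before l x y" if "in_upper_block \<tau> x" "\<not> in_upper_block \<tau> y" for x y
      using upper_block_last[OF c l] that unfolding \<tau>_def by blast
  qed (use not_in_lower_and_upper_block[OF \<tau>(1,2)] in blast)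
  ultimately show ?thesis
    by simp
qed

lemma extension_blocks:
  assumes "\<tau> \<in> extensions"
  shows "lower_block \<tau> @ free_block \<tau> @ upper_block \<tau> = \<tau>"
proof -
  have "filter (\<lambda>x. x \<in> S) \<tau> = \<tau>"
    using assms by (simp add: extensions_with_def filter_id_conv)
  then show ?thesis
    using extensions_with_blocks[OF compatible_chain_Nil assms] unfolding free_block_def by simp
qed

lemma extension_blocks_disjoint:
  assumes "\<tau> \<in> extensions"
  shows "distinct (lower_block \<tau> @ free_block \<tau> @ upper_block \<tau>)"
    and "set (lower_block \<tau>) \<union> set (free_block \<tau>) \<union> set (upper_block \<tau>) = S"
proof -
  have "distinct \<tau>" "set \<tau> = S"
    using assms by (auto simp: extensions_with_def)
  then have "distinct (lower_block \<tau> @ free_block \<tau> @ upper_block \<tau>)"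
    "set (lower_block \<tau> @ free_block \<tau> @ upper_block \<tau>) = S"
    by (simp_all only: extension_blocks[OF assms])
  then show "distinct (lower_block \<tau> @ free_block \<tau> @ upper_block \<tau>)"
    "set (lower_block \<tau>) \<union> set (free_block \<tau>) \<union> set (upper_block \<tau>) = S"
    by (simp_all add: Un_assoc)
qed

lemma set_free_block: "\<tau> \<in> extensions \<Longrightarrow> set (free_block \<tau>) \<subseteq> S - Lo - Hi"
  by (auto simp: free_block_def in_free_block_def in_lower_block_def in_upper_block_def
      extensions_with_def)

lemma sorted_wrt_merge:
  assumes c: "compatible_chain c" and sl: "set l = S \<union> set c"
    and sorted: "sorted_wrt R (filter (\<lambda>x. x \<in> S) l)" and fc: "filter (\<lambda>x. x \<in> set c) l = c"
    and Hi: "\<And>x y. x \<in> Hi \<Longrightarrow> y \<in> set c \<Longrightarrow> \<not> before l x y"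
    and Lo: "\<And>x y. x \<in> set c \<Longrightarrow> y \<in> Lo \<Longrightarrow> \<not> before l x y"
  shows "sorted_wrt R l"
  unfolding sorted_wrt_before
proof (intro allI impI)
  fix x y
  assume xy: "before l x y"
  have "x \<in> S \<union> set c" "y \<in> S \<union> set c"
    using before_set[OF xy] sl by auto
  then consider "x \<in> S" "y \<in> S" | "x \<in> S" "y \<in> set c" | "x \<in> set c" "y \<in> S" | "x \<in> set c" "y \<in> set c"
    by blast
  then show "R x y"
  proof cases
    case 1
    then have "before (filter (\<lambda>x. x \<in> S) l) x y"
      using xy by (simp add: before_filter)
    then show ?thesis
      using sorted unfolding sorted_wrt_before by blast
  next
    case 2
    moreover have "x \<notin> Hi"
      using Hi[OF _ 2(2)] xy by blast
    ultimately show ?thesis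
      using c unfolding compatible_chain_def by blast
  next
    case 3
    moreover have "y \<notin> Lo"
      using Lo[OF 3(1)] xy by blast
    ultimately show ?thesis
      using c unfolding compatible_chain_def by blast
  next
    case 4
    then have "before c x y"
      using xy fc before_filter[of "\<lambda>z. z \<in> set c" x y l] by simp
    then show ?thesis
      using c 4 unfolding compatible_chain_def by blast
  qed
qed

lemma merge_in_extensions_with:
  assumes c: "compatible_chain c" and \<tau>: "\<tau> \<in> extensions" and s: "s \<in> shuffles (free_block \<tau>) c"
  defines "l \<equiv> lower_block \<tau> @ s @ upper_block \<tau>"
  shows "l \<in> extensions_with c" and "filter (\<lambda>x. x \<in> S) l = \<tau>"
proof -
  let ?u = "lower_block \<tau>" and ?v = "free_block \<tau>" and ?w = "upper_block \<tau>"
  have \<tau>': "distinct \<tau>" "set \<tau> = S" "sorted_wrt R \<tau>"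
    using \<tau> by (auto simp: extensions_with_def)
  have duvw: "distinct (?u @ ?v @ ?w)" and Suvw: "set ?u \<union> set ?v \<union> set ?w = S"
    using extension_blocks_disjoint[OF \<tau>] by simp_all
  have dc: "distinct c" and cS: "set c \<inter> S = {}"
    using c by (auto simp: compatible_chain_def)
  have ss: "set s = set ?v \<union> set c"
    using s by (rule set_shuffles)
  have vc: "set ?v \<inter> set c = {}"
    using Suvw cS by auto
  have "distinct s"
    using distinct_disjoint_shuffles[OF _ dc vc s] duvw by simp
  then have dl: "distinct l"
    unfolding l_def using duvw ss cS Suvw by auto
  have sl: "set l = S \<union> set c"
    unfolding l_def using ss Suvw by auto
  have "filter (\<lambda>x. x \<in> S) s = filter (\<lambda>x. x \<in> set ?v) s"
    using ss Suvw cS by (auto intro: filter_cong)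
  also have "\<dots> = ?v"
    using filter_shuffles_disjoint1(1)[OF vc s] .
  finally have "filter (\<lambda>x. x \<in> S) s = ?v" .
  moreover have "filter (\<lambda>x. x \<in> S) ?u = ?u" "filter (\<lambda>x. x \<in> S) ?w = ?w"
    using Suvw by (auto simp: filter_id_conv)
  ultimately show fS: "filter (\<lambda>x. x \<in> S) l = \<tau>"
    unfolding l_def using extension_blocks[OF \<tau>] by simp
  have "filter (\<lambda>x. x \<in> set c) ?u = []" "filter (\<lambda>x. x \<in> set c) ?w = []"
    using Suvw cS by (auto simp: filter_empty_conv)
  then have fc: "filter (\<lambda>x. x \<in> set c) l = c"
    unfolding l_def using filter_shuffles_disjoint2(1)[OF vc s] by simp
  have "\<not> before l x y" if "x \<in> Hi" "y \<in> set c" for x y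
  proof -
    have "x \<in> set ?w"
      using that(1) \<tau>'(2) Hi_subset by (auto simp: upper_block_def in_upper_block_def)
    moreover from this have "x \<notin> set ?u" "x \<notin> set s" "y \<notin> set ?w"
      using that(2) duvw ss cS Suvw by auto
    ultimately show ?thesis
      unfolding l_def by (auto simp: before_append dest: before_set)
  qed
  moreover have "\<not> before l x y" if "x \<in> set c" "y \<in> Lo" for x y
  proof -
    have "y \<in> set ?u"
      using that(2) \<tau>'(2) Lo_subset by (auto simp: lower_block_def in_lower_block_def)
    moreover from this have "y \<notin> set s" "y \<notin> set ?w" "x \<notin> set ?u"
      using that(1) duvw ss cS Suvw by auto
    ultimately show ?thesis
      unfolding l_def by (auto simp: before_append dest: before_set)
  qed
  ultimately have "sorted_wrt R l"
    using sorted_wrt_merge[OF c sl] fS \<tau>'(3) fc by blast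
  then show "l \<in> extensions_with c"
    unfolding extensions_with_def using dl sl by blast
qed

lemma extensions_with_decomp:
  assumes c: "compatible_chain c" and l: "l \<in> extensions_with c"
  defines "\<tau> \<equiv> filter (\<lambda>x. x \<in> S) l"
  shows "\<tau> \<in> extensions" and "filter (in_free_block \<tau>) l \<in> shuffles (free_block \<tau>) c"
proof -
  have dl: "distinct l" and sl: "set l = S \<union> set c"
    using l by (auto simp: extensions_with_def)
  show "\<tau> \<in> extensions"
    using l by (auto simp: \<tau>_def extensions_with_def intro: sorted_wrt_filter)
  let ?s = "filter (in_free_block \<tau>) l"
  have "filter (\<lambda>x. x \<in> S) ?s = free_block \<tau>"
    unfolding free_block_def \<tau>_def by (simp add: filter_filter conj_commute)
  moreover have "filter (\<lambda>x. x \<notin> S) ?s = c"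
  proof -
    have "set \<tau> \<subseteq> S"
      unfolding \<tau>_def by auto
    then have "in_free_block \<tau> x" if "x \<notin> S" for x
      using that in_lower_block_mem[of \<tau> x] in_upper_block_mem[of \<tau> x]
      unfolding in_free_block_def by blast
    then have "filter (\<lambda>x. x \<notin> S) ?s = filter (\<lambda>x. x \<in> set c) l"
      using sl c unfolding filter_filter compatible_chain_def by (auto intro: filter_cong)
    then show ?thesis
      using chain_filter_eq[OF c l] by simp
  qed
  ultimately show "?s \<in> shuffles (free_block \<tau>) c"
    using filter_in_shuffles[of ?s "\<lambda>x. x \<in> S"] by simp
qed

lemma bij_betw_merge_extensions_with:
  assumes c: "compatible_chain c"
  shows "bij_betw (\<lambda>(\<tau>, s). lower_block \<tau> @ s @ upper_block \<tau>)
    (SIGMA \<tau>:extensions. shuffles (free_block \<tau>) c) (extensions_with c)"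
proof (rule bij_betw_imageI)
  show "inj_on (\<lambda>(\<tau>, s). lower_block \<tau> @ s @ upper_block \<tau>) (SIGMA \<tau>:extensions. shuffles (free_block \<tau>) c)"
  proof (rule inj_onI, clarify)
    fix \<tau> s \<tau>' s'
    assume "\<tau> \<in> extensions" "s \<in> shuffles (free_block \<tau>) c"
      and "\<tau>' \<in> extensions" "s' \<in> shuffles (free_block \<tau>') c"
      and eq: "lower_block \<tau> @ s @ upper_block \<tau> = lower_block \<tau>' @ s' @ upper_block \<tau>'"
    then have "\<tau> = \<tau>'"
      using merge_in_extensions_with(2)[OF c] by metis
    then show "\<tau> = \<tau>' \<and> s = s'"
      using eq by simp
  qed
  show "(\<lambda>(\<tau>, s). lower_block \<tau> @ s @ upper_block \<tau>) ` (SIGMA \<tau>:extensions. shuffles (free_block \<tau>) c)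
      = extensions_with c"
  proof (intro equalityI subsetI)
    fix l
    assume "l \<in> extensions_with c"
    then show "l \<in> (\<lambda>(\<tau>, s). lower_block \<tau> @ s @ upper_block \<tau>) ` (SIGMA \<tau>:extensions. shuffles (free_block \<tau>) c)"
      using extensions_with_decomp[OF c] extensions_with_blocks[OF c]
      by (intro image_eqI[where x = "(filter (\<lambda>x. x \<in> S) l, filter (in_free_block (filter (\<lambda>x. x \<in> S) l)) l)"]) auto
  qed (use merge_in_extensions_with(1)[OF c] in auto)
qed

lemma inversion_sign_merge:
  assumes c: "compatible_chain c" and r: "distinct (A @ c @ B)" "set A \<union> set B = S"
    and \<tau>: "\<tau> \<in> extensions" and s: "s \<in> shuffles (free_block \<tau>) c"
  shows "inversion_sign (A @ c @ B) (lower_block \<tau> @ s @ upper_block \<tau>)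
    = inversion_sign (A @ B) \<tau> * (-1) ^ (length c * (length A + length (lower_block \<tau>)))
      * cross_sign s (set (free_block \<tau>)) (set c)"
proof -
  let ?u = "lower_block \<tau>" and ?v = "free_block \<tau>" and ?w = "upper_block \<tau>"
  let ?l = "?u @ s @ ?w"
  have l: "?l \<in> extensions_with c" and l\<tau>: "filter (\<lambda>x. x \<in> S) ?l = \<tau>"
    using merge_in_extensions_with[OF c \<tau> s] by auto
  have dl: "distinct ?l" and sl: "set ?l = S \<union> set c"
    using l by (auto simp: extensions_with_def)
  have cS: "set c \<inter> S = {}"
    using c by (simp add: compatible_chain_def)
  have "filter (\<lambda>x. x \<notin> set c) ?l = filter (\<lambda>x. x \<in> S) ?l"
    by (rule filter_cong) (use sl cS in auto)
  then have "filter (\<lambda>x. x \<notin> set c) ?l = \<tau>"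
    using l\<tau> by simp
  then have "inversion_sign (A @ c @ B) ?l
      = inversion_sign (A @ B) \<tau> * (-1) ^ (length A * length c) * cross_sign ?l S (set c)"
    using inversion_sign_remove_block[OF r(1) dl _ chain_filter_eq[OF c l]] sl r(2) by auto
  also have "S = set ?u \<union> set ?v \<union> set ?w"
    using extension_blocks_disjoint(2)[OF \<tau>] by simp
  also have "cross_sign ?l (set ?u \<union> set ?v \<union> set ?w) (set c)
      = (-1) ^ (length ?u * length c) * cross_sign s (set ?v) (set c)"
    using cross_sign_append_blocks[OF dl set_shuffles[OF s]] extension_blocks_disjoint(2)[OF \<tau>] cS c
    by (auto simp: compatible_chain_def distinct_card)
  finally show ?thesis
    by (simp add: power_add distrib_left mult.commute mult.left_commute)
qed

lemma finite_extensions_with: "finite S \<Longrightarrow> finite (extensions_with c)"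
  by (rule finite_subset[OF _ finite_subset_distinct[of "S \<union> set c"]]) (auto simp: extensions_with_def)

lemma free_block_chain_disjoint:
  "\<tau> \<in> extensions \<Longrightarrow> compatible_chain c \<Longrightarrow> set (free_block \<tau>) \<inter> set c = {}"
  using extension_blocks_disjoint(2) by (fastforce simp: compatible_chain_def)

lemma card_extensions_with:
  assumes "finite S" "compatible_chain c"
  shows "card (extensions_with c)
    = (\<Sum>\<tau>\<in>extensions. (length (free_block \<tau>) + length c) choose length (free_block \<tau>))"
proof -
  have "card (extensions_with c) = card (SIGMA \<tau>:extensions. shuffles (free_block \<tau>) c)"
    using bij_betw_same_card[OF bij_betw_merge_extensions_with[OF assms(2)]] by simp
  also have "\<dots> = (\<Sum>\<tau>\<in>extensions. card (shuffles (free_block \<tau>) c))"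
    using finite_extensions_with[OF assms(1)] by (simp add: card_SigmaI)
  also have "\<dots> = (\<Sum>\<tau>\<in>extensions. (length (free_block \<tau>) + length c) choose length (free_block \<tau>))"
    using free_block_chain_disjoint assms(2) by (intro sum.cong refl card_disjoint_shuffles) auto
  finally show ?thesis .
qed

lemma sum_inversion_sign_extensions_with:
  assumes "finite S" and c: "compatible_chain c" and r: "distinct (A @ c @ B)" "set A \<union> set B = S"
  shows "(\<Sum>l\<in>extensions_with c. inversion_sign (A @ c @ B) l)
    = (\<Sum>\<tau>\<in>extensions. inversion_sign (A @ B) \<tau> * (-1) ^ (length c * (length A + length (lower_block \<tau>)))
        * signed_shuffle_count (length (free_block \<tau>)) (length c))"
proof -
  have "(\<Sum>l\<in>extensions_with c. inversion_sign (A @ c @ B) l)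
      = (\<Sum>(\<tau>, s)\<in>(SIGMA \<tau>:extensions. shuffles (free_block \<tau>) c).
          inversion_sign (A @ c @ B) (lower_block \<tau> @ s @ upper_block \<tau>))"
    using sum.reindex_bij_betw[OF bij_betw_merge_extensions_with[OF c], of "inversion_sign (A @ c @ B)"]
    by (simp add: case_prod_unfold)
  also have "\<dots> = (\<Sum>\<tau>\<in>extensions. \<Sum>s\<in>shuffles (free_block \<tau>) c.
      inversion_sign (A @ B) \<tau> * (-1) ^ (length c * (length A + length (lower_block \<tau>)))
      * cross_sign s (set (free_block \<tau>)) (set c))"
    using finite_extensions_with[OF assms(1)]
    by (subst sum.Sigma[symmetric]) (auto intro!: sum.cong inversion_sign_merge[OF c r])
  also have "\<dots> = (\<Sum>\<tau>\<in>extensions. inversion_sign (A @ B) \<tau> * (-1) ^ (length c * (length A + length (lower_block \<tau>)))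
      * signed_shuffle_count (length (free_block \<tau>)) (length c))"
  proof (intro sum.cong refl)
    fix \<tau>
    assume \<tau>: "\<tau> \<in> extensions"
    have "distinct (free_block \<tau>)" "distinct c"
      using extension_blocks_disjoint(1)[OF \<tau>] c by (auto simp: compatible_chain_def)
    then show "(\<Sum>s\<in>shuffles (free_block \<tau>) c. inversion_sign (A @ B) \<tau> * (-1) ^ (length c * (length A + length (lower_block \<tau>)))
        * cross_sign s (set (free_block \<tau>)) (set c))
      = inversion_sign (A @ B) \<tau> * (-1) ^ (length c * (length A + length (lower_block \<tau>)))
        * signed_shuffle_count (length (free_block \<tau>)) (length c)"
      using sum_cross_sign_shuffles[OF free_block_chain_disjoint[OF \<tau> c]]
      by (simp add: sum_distrib_left[symmetric])
  qed
  finally show ?thesis .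
qed

end

section \<open>Lexicographic sums of chains\<close>

definition row :: "nat \<Rightarrow> nat \<Rightarrow> (nat \<times> nat) list" where
  "row i n = map (\<lambda>j. (i, j)) [1..<n + 1]"

lemma set_row: "set (row i n) = {i} \<times> {1..<n + 1}"
  by (auto simp: row_def)

lemma set_concat_rows: "set (concat (map (\<lambda>i. row i (f i)) I)) = (SIGMA i:set I. {1..<f i + 1})"
  by (auto simp: set_row)

lemma length_row: "length (row i n) = n"
  by (simp add: row_def)

lemma distinct_row: "distinct (row i n)"
  by (simp add: row_def distinct_map inj_on_def)

lemma distinct_concat_rows: "distinct I \<Longrightarrow> distinct (concat (map (\<lambda>i. row i (f i)) I))"
  by (induction I) (auto simp: distinct_row set_row)

lemma before_row:
  assumes "x \<in> set (row i n)" "y \<in> set (row i n)"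
  shows "before (row i n) x y \<longleftrightarrow> snd x < snd y"
proof -
  have "sorted_wrt (\<lambda>x y. snd x < snd y) (row i n)"
    unfolding row_def sorted_wrt_map by (simp del: upt_Suc)
  then have mono: "before (row i n) x y \<Longrightarrow> snd x < snd y" for x y
    unfolding sorted_wrt_before by blast
  show ?thesis
  proof
    assume "snd x < snd y"
    then have "x \<noteq> y"
      by auto
    then have "before (row i n) x y \<or> before (row i n) y x"
      by (rule before_total[OF assms])
    then show "before (row i n) x y"
      using mono[of y x] \<open>snd x < snd y\<close> by auto
  qed (rule mono)
qed

lemma ref_order_split:
  assumes "i0 \<in> {1..m0}"
  shows "ref_order m0 m = concat (map (\<lambda>i. row i (m i)) [1..<i0]) @ row i0 (m i0)
    @ concat (map (\<lambda>i. row i (m i)) [Suc i0..<m0 + 1])"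
proof -
  have "[1..<i0 + (m0 + 1 - i0)] = [1..<i0] @ [i0..<i0 + (m0 + 1 - i0)]"
    using assms by (intro upt_add_eq_append) auto
  moreover have "i0 + (m0 + 1 - i0) = m0 + 1" "[i0..<m0 + 1] = i0 # [Suc i0..<m0 + 1]"
    using assms by (simp_all add: upt_conv_Cons)
  ultimately have "[1..<m0 + 1] = [1..<i0] @ i0 # [Suc i0..<m0 + 1]"
    by metis
  then show ?thesis
    unfolding ref_order_def row_def by simp
qed

text \<open>The chain at index \<open>i0\<close> receives the variable length \<open>k\<close>, so the value \<open>m i0\<close> plays
  no role.\<close>

locale varying_chain =
  fixes le0 :: "nat \<Rightarrow> nat \<Rightarrow> bool" and m0 i0 :: nat and m :: "nat \<Rightarrow> nat"
  assumes refl: "\<And>x. x \<in> {1..m0} \<Longrightarrow> le0 x x"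
    and antisym: "\<And>x y. x \<in> {1..m0} \<Longrightarrow> y \<in> {1..m0} \<Longrightarrow> le0 x y \<Longrightarrow> le0 y x \<Longrightarrow> x = y"
    and trans: "\<And>x y z. x \<in> {1..m0} \<Longrightarrow> y \<in> {1..m0} \<Longrightarrow> z \<in> {1..m0} \<Longrightarrow>
                  le0 x y \<Longrightarrow> le0 y z \<Longrightarrow> le0 x z"
    and i0: "i0 \<in> {1..m0}"
begin

definition rows_before :: "(nat \<times> nat) list" where
  "rows_before = concat (map (\<lambda>i. row i (m i)) [1..<i0])"

definition rows_after :: "(nat \<times> nat) list" where
  "rows_after = concat (map (\<lambda>i. row i (m i)) [Suc i0..<m0 + 1])"

definition others :: "(nat \<times> nat) set" where
  "others = set rows_before \<union> set rows_after"

definition may_precede :: "nat \<times> nat \<Rightarrow> nat \<times> nat \<Rightarrow> bool" where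
  "may_precede x y \<longleftrightarrow> \<not> lexsum_le le0 y x"

definition others_below :: "(nat \<times> nat) set" where
  "others_below = {y \<in> others. le0 (fst y) i0}"

definition others_above :: "(nat \<times> nat) set" where
  "others_above = {y \<in> others. le0 i0 (fst y)}"

definition others_incomparable :: "(nat \<times> nat) set" where
  "others_incomparable = others - others_below - others_above"

lemma ref_order_eq: "ref_order m0 (m(i0 := k)) = rows_before @ row i0 k @ rows_after"
proof -
  have "concat (map (\<lambda>i. row i ((m(i0 := k)) i)) [1..<i0]) = rows_before"
    "concat (map (\<lambda>i. row i ((m(i0 := k)) i)) [Suc i0..<m0 + 1]) = rows_after"
    unfolding rows_before_def rows_after_def by (intro arg_cong[where f = concat] map_cong; auto)+
  then show ?thesis
    unfolding ref_order_split[OF i0] fun_upd_same by (simp only:)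
qed

lemma distinct_ref_order: "distinct (rows_before @ row i0 k @ rows_after)"
proof -
  have "distinct (ref_order m0 (m(i0 := k)))"
    using distinct_concat_rows[of "[1..<m0 + 1]" "m(i0 := k)"] unfolding ref_order_def row_def by simp
  then show ?thesis
    unfolding ref_order_eq .
qed

lemma others_eq: "others = (SIGMA i:{1..m0} - {i0}. {1..<m i + 1})"
  unfolding others_def rows_before_def rows_after_def set_concat_rows using i0 by auto

lemma finite_others: "finite others"
  unfolding others_def by simp

lemma set_row_i0_disjoint: "set (row i0 k) \<inter> others = {}"
  unfolding set_row others_eq by auto

sublocale chain_insertion may_precede others others_below others_above
proof
  show "others_below \<subseteq> others" "others_above \<subseteq> others"
    unfolding others_below_def others_above_def by auto
  show "others_below \<inter> others_above = {}"
  proof (intro equalityI subsetI)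
    fix y
    assume "y \<in> others_below \<inter> others_above"
    then have "fst y \<in> {1..m0}" "fst y \<noteq> i0" "le0 (fst y) i0" "le0 i0 (fst y)"
      unfolding others_below_def others_above_def others_eq by auto
    then show "y \<in> {}"
      using antisym[OF _ i0] by blast
  qed simp
  fix y z
  assume y: "y \<in> others_below" and z: "z \<in> others_above"
  have "fst y \<in> {1..m0}" "fst z \<in> {1..m0}" "le0 (fst y) i0" "le0 i0 (fst z)" "fst y \<noteq> i0"
    using y z unfolding others_below_def others_above_def others_eq by auto
  then have "fst y \<noteq> fst z" "le0 (fst y) (fst z)"
    using antisym[OF _ i0, of "fst y"] trans[OF _ i0, of "fst y" "fst z"] by auto
  then show "\<not> may_precede z y"
    unfolding may_precede_def lexsum_le_def by simp
qed

lemma compatible_chain_row: "compatible_chain (row i0 k)"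
  unfolding compatible_chain_def
proof (intro conjI ballI)
  show "distinct (row i0 k)" "set (row i0 k) \<inter> others = {}"
    by (simp_all add: distinct_row set_row_i0_disjoint)
next
  fix x y
  assume "x \<in> set (row i0 k)" "y \<in> set (row i0 k)"
  then show "may_precede x y \<longleftrightarrow> before (row i0 k) x y"
    unfolding before_row[OF \<open>x \<in> _\<close> \<open>y \<in> _\<close>] may_precede_def lexsum_le_def by (auto simp: set_row)
next
  fix y x
  assume "y \<in> others" "x \<in> set (row i0 k)"
  then have "fst x = i0" "fst y \<noteq> i0"
    unfolding set_row others_eq by auto
  then show "may_precede y x \<longleftrightarrow> y \<notin> others_above" "may_precede x y \<longleftrightarrow> y \<notin> others_below"
    using \<open>y \<in> others\<close> unfolding may_precede_def lexsum_le_def others_above_def others_below_def by auto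
qed

lemma is_linearization_iff:
  fixes k :: nat
  defines "r \<equiv> ref_order m0 (m(i0 := k))"
  shows "is_linearization le0 m0 (m(i0 := k)) \<sigma>
    \<longleftrightarrow> \<sigma> permutes {..<length r} \<and> sorted_wrt may_precede (permute_list \<sigma> r)"
proof -
  have "(\<forall>a<length r. \<forall>b<length r. lexsum_le le0 (r ! \<sigma> a) (r ! \<sigma> b) \<longrightarrow> a \<le> b)
      \<longleftrightarrow> (\<forall>i j. i < j \<longrightarrow> j < length r \<longrightarrow> \<not> lexsum_le le0 (r ! \<sigma> j) (r ! \<sigma> i))"
    by (meson less_trans not_le)
  also have "\<dots> \<longleftrightarrow> (\<forall>i j. i < j \<longrightarrow> j < length r \<longrightarrow> may_precede (permute_list \<sigma> r ! i) (permute_list \<sigma> r ! j))"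
    unfolding may_precede_def
  proof (intro iff_allI imp_cong refl)
    fix i j
    assume "i < j" "j < length r"
    then have "i < length r"
      by simp
    with \<open>j < length r\<close> show "(\<not> lexsum_le le0 (r ! \<sigma> j) (r ! \<sigma> i))
        \<longleftrightarrow> (\<not> lexsum_le le0 (permute_list \<sigma> r ! j) (permute_list \<sigma> r ! i))"
      by (simp add: permute_list_def)
  qed simp_all
  finally show ?thesis
    unfolding is_linearization_def Let_def r_def[symmetric] sorted_wrt_iff_nth_less by simp
qed

lemma bij_betw_linearizations:
  "bij_betw (\<lambda>\<sigma>. permute_list \<sigma> (ref_order m0 (m(i0 := k))))
    {\<sigma>. is_linearization le0 m0 (m(i0 := k)) \<sigma>} (extensions_with (row i0 k))"
proof (rule bij_betw_imageI)
  let ?r = "ref_order m0 (m(i0 := k))"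
  have dr: "distinct ?r" and sr: "set ?r = others \<union> set (row i0 k)"
    using distinct_ref_order unfolding ref_order_eq others_def by auto
  show "inj_on (\<lambda>\<sigma>. permute_list \<sigma> ?r) {\<sigma>. is_linearization le0 m0 (m(i0 := k)) \<sigma>}"
    using permute_list_inject[OF dr] unfolding is_linearization_iff by (auto intro: inj_onI)
  show "(\<lambda>\<sigma>. permute_list \<sigma> ?r) ` {\<sigma>. is_linearization le0 m0 (m(i0 := k)) \<sigma>} = extensions_with (row i0 k)"
  proof (intro equalityI subsetI)
    fix l
    assume "l \<in> extensions_with (row i0 k)"
    then have l: "distinct l" "set l = set ?r" "sorted_wrt may_precede l"
      unfolding extensions_with_def sr by auto
    then have "mset l = mset ?r"
      using dr by (simp add: set_eq_iff_mset_eq_distinct)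
    then obtain \<sigma> where "\<sigma> permutes {..<length ?r}" "permute_list \<sigma> ?r = l"
      by (rule mset_eq_permutation)
    then show "l \<in> (\<lambda>\<sigma>. permute_list \<sigma> ?r) ` {\<sigma>. is_linearization le0 m0 (m(i0 := k)) \<sigma>}"
      using l(3) unfolding is_linearization_iff by blast
  next
    fix l
    assume "l \<in> (\<lambda>\<sigma>. permute_list \<sigma> ?r) ` {\<sigma>. is_linearization le0 m0 (m(i0 := k)) \<sigma>}"
    then obtain \<sigma> where "\<sigma> permutes {..<length ?r}" "sorted_wrt may_precede l" "l = permute_list \<sigma> ?r"
      unfolding is_linearization_iff by blast
    then show "l \<in> extensions_with (row i0 k)"
      using dr sr by (simp add: extensions_with_def)
  qed
qed

lemma L_plus_eq:
  "L_plus le0 m0 (m(i0 := k)) = (\<Sum>\<tau>\<in>extensions. (length (free_block \<tau>) + k) choose length (free_block \<tau>))"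
  using card_extensions_with[OF finite_others compatible_chain_row, of k]
    bij_betw_same_card[OF bij_betw_linearizations]
  by (simp add: L_plus_def length_row)

lemma L_minus_eq:
  "L_minus le0 m0 (m(i0 := k)) = (\<Sum>\<tau>\<in>extensions. inversion_sign (rows_before @ rows_after) \<tau>
    * (-1) ^ (k * (length rows_before + length (lower_block \<tau>))) * signed_shuffle_count (length (free_block \<tau>)) k)"
proof -
  let ?r = "ref_order m0 (m(i0 := k))"
  have "L_minus le0 m0 (m(i0 := k))
      = (\<Sum>\<sigma>\<in>{\<sigma>. is_linearization le0 m0 (m(i0 := k)) \<sigma>}. inversion_sign ?r (permute_list \<sigma> ?r))"
    unfolding L_minus_def using distinct_ref_order
    by (intro sum.cong refl sign_eq_inversion_sign) (auto simp: ref_order_eq is_linearization_iff)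
  also have "\<dots> = (\<Sum>l\<in>extensions_with (row i0 k). inversion_sign ?r l)"
    by (rule sum.reindex_bij_betw[OF bij_betw_linearizations])
  also have "\<dots> = (\<Sum>\<tau>\<in>extensions. inversion_sign (rows_before @ rows_after) \<tau>
      * (-1) ^ (k * (length rows_before + length (lower_block \<tau>))) * signed_shuffle_count (length (free_block \<tau>)) k)"
    unfolding ref_order_eq
    using sum_inversion_sign_extensions_with[OF finite_others compatible_chain_row distinct_ref_order]
    by (simp add: others_def length_row)
  finally show ?thesis .
qed

definition height_class :: "nat \<Rightarrow> nat" where
  "height_class i = (if le0 i i0 then 0 else if le0 i0 i then 2 else 1)"

definition down_card :: "nat \<Rightarrow> nat" where
  "down_card i = card {i' \<in> {1..m0}. le0 i' i}"

text \<open>Listing \<open>others\<close> by increasing \<open>sort_key\<close> gives a linear extension in which every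
  element incomparable with \<open>i0\<close> comes after all elements below \<open>i0\<close> and before all elements
  above it, so that its free block is as large as possible.\<close>

definition sort_key :: "nat \<times> nat \<Rightarrow> nat \<times> nat \<times> nat \<times> nat" where
  "sort_key x = (height_class (fst x), down_card (fst x), x)"

lemma sort_key_mono:
  assumes x: "x \<in> others" and y: "y \<in> others" and "x \<noteq> y" and le: "lexsum_le le0 y x"
  shows "sort_key y < sort_key x"
proof -
  have a: "fst y \<in> {1..m0}" and b: "fst x \<in> {1..m0}"
    using x y unfolding others_eq by auto
  consider "fst y \<noteq> fst x" "le0 (fst y) (fst x)" | "fst y = fst x" "snd y < snd x"
    using le \<open>x \<noteq> y\<close> unfolding lexsum_le_def by (auto simp: prod_eq_iff)
  then show ?thesis
  proof cases
    case 1
    have "le0 (fst y) i0" if "le0 (fst x) i0"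
      using trans[OF a b i0 1(2) that] .
    moreover have "le0 i0 (fst x)" if "le0 i0 (fst y)"
      using trans[OF i0 a b that 1(2)] .
    ultimately have "height_class (fst y) \<le> height_class (fst x)"
      unfolding height_class_def by auto
    moreover have "down_card (fst y) < down_card (fst x)"
      unfolding down_card_def
    proof (rule psubset_card_mono)
      have "le0 i (fst x)" if "i \<in> {1..m0}" "le0 i (fst y)" for i
        using trans[OF that(1) a b that(2) 1(2)] .
      moreover have "\<not> le0 (fst x) (fst y)"
        using antisym[OF a b 1(2)] 1(1) by blast
      ultimately show "{i \<in> {1..m0}. le0 i (fst y)} \<subset> {i \<in> {1..m0}. le0 i (fst x)}"
        using refl[OF b] b by blast
    qed simp
    ultimately show ?thesis
      unfolding sort_key_def by (auto simp: less_prod_def)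
  next
    case 2
    then show ?thesis
      unfolding sort_key_def by (auto simp: less_prod_def)
  qed
qed

lemma extension_sorted_by_key:
  obtains \<tau> where "\<tau> \<in> extensions" "\<And>x y. before \<tau> x y \<Longrightarrow> sort_key x < sort_key y"
proof -
  define \<tau> where "\<tau> = map (\<lambda>k. snd (snd k)) (sorted_list_of_set (sort_key ` others))"
  have key_\<tau>: "map sort_key \<tau> = sorted_list_of_set (sort_key ` others)"
    unfolding \<tau>_def map_map using finite_others by (intro map_idI) (auto simp: sort_key_def)
  have set_\<tau>: "set \<tau> = others"
    unfolding \<tau>_def using finite_others by (simp add: image_image sort_key_def)
  have "distinct (map sort_key \<tau>)"
    unfolding key_\<tau> by simp
  then have dist_\<tau>: "distinct \<tau>"
    by (simp add: distinct_map)
  have "sorted_wrt (<) (map sort_key \<tau>)"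
    unfolding key_\<tau> by simp
  then have "sorted_wrt (\<lambda>x y. sort_key x < sort_key y) \<tau>"
    by (simp add: sorted_wrt_map)
  then have key_less: "before \<tau> x y \<Longrightarrow> sort_key x < sort_key y" for x y
    unfolding sorted_wrt_before by blast
  have "may_precede x y" if xy: "before \<tau> x y" for x y
  proof -
    have "x \<in> others" "y \<in> others" "x \<noteq> y"
      using before_set[OF xy] before_irrefl[OF dist_\<tau>, of x] xy set_\<tau> by auto
    then show ?thesis
      using key_less[OF xy] sort_key_mono[of x y] less_asym unfolding may_precede_def by blast
  qed
  then have "\<tau> \<in> extensions"
    using dist_\<tau> set_\<tau> unfolding extensions_with_def sorted_wrt_before by simp
  then show ?thesis
    using that key_less by blast
qed

lemma exists_extension_free_block:
  obtains \<tau> where "\<tau> \<in> extensions" "set (free_block \<tau>) = others_incomparable"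
proof -
  obtain \<tau> where \<tau>: "\<tau> \<in> extensions" and key_less: "\<And>x y. before \<tau> x y \<Longrightarrow> sort_key x < sort_key y"
    using extension_sorted_by_key by blast
  have "x \<in> set (free_block \<tau>)" if x: "x \<in> others_incomparable" for x
  proof -
    have "x \<in> others" "x \<notin> others_below" "x \<notin> others_above" "height_class (fst x) = 1"
      using x unfolding others_incomparable_def others_below_def others_above_def height_class_def
      by auto
    moreover have "\<not> before \<tau> x y" if "y \<in> others_below" for y
      using that key_less[of x y] \<open>height_class (fst x) = 1\<close>
      unfolding others_below_def height_class_def sort_key_def by (auto simp: less_prod_def)
    moreover have "\<not> before \<tau> y x" if "y \<in> others_above" for y
    proof -
      have "fst y \<in> {1..m0}" "fst y \<noteq> i0" "le0 i0 (fst y)"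
        using that unfolding others_above_def others_eq by auto
      then have "height_class (fst y) = 2"
        using antisym[OF _ i0] unfolding height_class_def by auto
      then show ?thesis
        using key_less[of y x] \<open>height_class (fst x) = 1\<close> unfolding sort_key_def by (auto simp: less_prod_def)
    qed
    moreover have "set \<tau> = others"
      using \<tau> by (simp add: extensions_with_def)
    ultimately show ?thesis
      unfolding free_block_def in_free_block_def in_lower_block_def in_upper_block_def by auto
  qed
  then have "set (free_block \<tau>) = others_incomparable"
    using set_free_block[OF \<tau>] unfolding others_incomparable_def by blast
  then show ?thesis
    using that \<tau> by blast
qed

lemma length_free_block_le:
  assumes "\<tau> \<in> extensions"
  shows "length (free_block \<tau>) \<le> card others_incomparable"
proof -
  have "length (free_block \<tau>) = card (set (free_block \<tau>))"
    using extension_blocks_disjoint(1)[OF assms] by (simp add: distinct_card)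
  also have "\<dots> \<le> card others_incomparable"
    using set_free_block[OF assms] finite_others unfolding others_incomparable_def by (intro card_mono) auto
  finally show ?thesis .
qed

lemma card_others_incomparable:
  "card others_incomparable = (\<Sum>i\<in>{i\<in>{1..m0}. i \<noteq> i0 \<and> \<not> le0 i i0 \<and> \<not> le0 i0 i}. m i)"
proof -
  have "others_incomparable = (SIGMA i:{i\<in>{1..m0}. i \<noteq> i0 \<and> \<not> le0 i i0 \<and> \<not> le0 i0 i}. {1..<m i + 1})"
    unfolding others_incomparable_def others_eq others_below_def others_above_def by auto
  then show ?thesis
    by (simp add: card_SigmaI)
qed

lemma L_plus_polynomial:
  "\<exists>f :: rat poly. degree f = card others_incomparable \<and>
     (\<forall>k. of_nat (L_plus le0 m0 (m(i0 := k))) = poly f (of_nat k))"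
proof -
  obtain \<tau>\<^sub>0 where \<tau>\<^sub>0: "\<tau>\<^sub>0 \<in> extensions" "set (free_block \<tau>\<^sub>0) = others_incomparable"
    by (rule exists_extension_free_block)
  have "distinct (free_block \<tau>\<^sub>0)"
    using extension_blocks_disjoint(1)[OF \<tau>\<^sub>0(1)] by simp
  then have max: "length (free_block \<tau>\<^sub>0) = card others_incomparable"
    using distinct_card \<tau>\<^sub>0(2) by metis
  define f where "f = (\<Sum>\<tau>\<in>extensions. binomial_poly (length (free_block \<tau>)))"
  have "degree f = card others_incomparable"
    unfolding f_def max[symmetric] using finite_extensions_with[OF finite_others] \<tau>\<^sub>0(1)
    by (intro degree_sum_binomial_poly) (auto simp: max length_free_block_le)
  moreover have "of_nat (L_plus le0 m0 (m(i0 := k))) = poly f (of_nat k)" for k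
    unfolding L_plus_eq f_def poly_sum of_nat_sum by (simp add: poly_binomial_poly)
  ultimately show ?thesis
    by blast
qed

lemma L_minus_polynomials:
  "\<exists>(g0 :: rat poly) (g1 :: rat poly). degree g0 \<le> card others_incomparable div 2 \<and> degree g1 \<le> card others_incomparable div 2 \<and>
     (\<forall>k. even k \<longrightarrow> of_int (L_minus le0 m0 (m(i0 := k))) = poly g0 (of_nat k)) \<and>
     (\<forall>k. odd k \<longrightarrow> of_int (L_minus le0 m0 (m(i0 := k))) = poly g1 (of_nat k))"
proof -
  let ?w = "\<lambda>\<tau>. length (free_block \<tau>)" and ?sgn = "inversion_sign (rows_before @ rows_after)"
    and ?e = "\<lambda>\<tau>. length rows_before + length (lower_block \<tau>)"
  define g0 where "g0 = (\<Sum>\<tau>\<in>extensions. smult (of_int (?sgn \<tau>)) (signed_shuffle_poly_even (?w \<tau>)))"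
  define g1 where
    "g1 = (\<Sum>\<tau>\<in>extensions. smult (of_int (?sgn \<tau> * (-1) ^ ?e \<tau>)) (signed_shuffle_poly_odd (?w \<tau>)))"
  have "?w \<tau> div 2 \<le> card others_incomparable div 2" if "\<tau> \<in> extensions" for \<tau>
    using length_free_block_le[OF that] by (rule div_le_mono)
  then have deg: "degree g0 \<le> card others_incomparable div 2" "degree g1 \<le> card others_incomparable div 2"
    unfolding g0_def g1_def using finite_extensions_with[OF finite_others]
    by (auto intro!: degree_sum_le order.trans[OF degree_smult_le]
        order.trans[OF degree_signed_shuffle_poly_even] order.trans[OF degree_signed_shuffle_poly_odd])
  have g0_eval: "of_int (L_minus le0 m0 (m(i0 := k))) = poly g0 (of_nat k)" if "even k" for k
    unfolding L_minus_eq g0_def poly_sum of_int_sum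
    using that by (simp add: power_mult poly_signed_shuffle_poly_even)
  have g1_eval: "of_int (L_minus le0 m0 (m(i0 := k))) = poly g1 (of_nat k)" if "odd k" for k
    unfolding L_minus_eq g1_def poly_sum of_int_sum
    using that by (simp add: power_mult poly_signed_shuffle_poly_odd)
  show ?thesis
    using deg g0_eval g1_eval by (intro exI[of _ g0] exI[of _ g1]) auto
qed

end

theorem proposition5p1:
  fixes le0 :: "nat \<Rightarrow> nat \<Rightarrow> bool" and m0 i0 :: nat and m :: "nat \<Rightarrow> nat"
  assumes refl: "\<And>x. x \<in> {1..m0} \<Longrightarrow> le0 x x"
    and antisym: "\<And>x y. x \<in> {1..m0} \<Longrightarrow> y \<in> {1..m0} \<Longrightarrow> le0 x y \<Longrightarrow> le0 y x \<Longrightarrow> x = y"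
    and trans: "\<And>x y z. x \<in> {1..m0} \<Longrightarrow> y \<in> {1..m0} \<Longrightarrow> z \<in> {1..m0} \<Longrightarrow>
                  le0 x y \<Longrightarrow> le0 y z \<Longrightarrow> le0 x z"
    and i0: "i0 \<in> {1..m0}"
  defines "D \<equiv> (\<Sum>i\<in>{i\<in>{1..m0}. i \<noteq> i0 \<and> \<not> le0 i i0 \<and> \<not> le0 i0 i}. m i)"
  shows "(\<exists>f :: rat poly. degree f = D \<and>
            (\<forall>k::nat. of_nat (L_plus le0 m0 (m(i0 := k))) = poly f (of_nat k)))
       \<and> (\<exists>(g0 :: rat poly) (g1 :: rat poly). degree g0 \<le> D div 2 \<and> degree g1 \<le> D div 2 \<and>
            (\<forall>k::nat. even k \<longrightarrow> of_int (L_minus le0 m0 (m(i0 := k))) = poly g0 (of_nat k)) \<and>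
            (\<forall>k::nat. odd k \<longrightarrow> of_int (L_minus le0 m0 (m(i0 := k))) = poly g1 (of_nat k)))"
proof -
  interpret varying_chain le0 m0 i0 m
    using refl antisym trans i0 by unfold_locales
  have "D = card others_incomparable"
    unfolding D_def by (rule card_others_incomparable[symmetric])
  then show ?thesis
    using L_plus_polynomial L_minus_polynomials by simp
qed

end
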